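(* Let $\mathcal H$ be the $5$-uniform hypergraph defined below, let $e,f$ be two edges of $\mathcal H$, and let $\phi : V(\mathcal{H}_{ef}) \to V(\mathcal{H})$ be a monomorphism. If $b, e_5 \in \mathcal{H}_{ef}$, then $\phi$ is the identity.
   Context: $\mathcal{H}$ has vertex set $\{z, v_1,\dots,v_9\}$ and edges $r=\{z,v_1,v_3,v_5,v_8\}$, $g=\{z,v_2,v_4,v_7,v_9\}$, $a=\{v_1,v_4,v_6,v_8,v_9\}$, $b=\{v_9,v_1,v_2,v_3,v_4\}$, and $e_i=\{v_i,v_{i+1},v_{i+2},v_{i+3},v_{i+4}\}$ for $i=1,\dots,5$. $\mathcal{H}_{ef}$ is the hypergraph with edge set $E(\mathcal H)\setminus\{e,f\}$, and $V(\mathcal H_{ef})$ is the union of its edges. A monomorphism $\phi: V(\mathcal{H}_{ef})\to V(\mathcal{H})$ is an injective map such that $\{\phi(y): y\in x\}$ is an edge of $\mathcal H$ for every edge $x$ of $\mathcal H_{ef}$; "identity" means $\phi(y)=y$ for all $y\in V(\mathcal H_{ef})$. *)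

theory Defs
  imports Main
begin

text \<open>Vertices: z is encoded as 0, v_i as the natural number i (1 \<le> i \<le> 9).\<close>

definition vz :: nat where "vz = 0"

definition Hr :: "nat set" where "Hr = {vz, 1, 3, 5, 8}"
definition Hg :: "nat set" where "Hg = {vz, 2, 4, 7, 9}"
definition Ha :: "nat set" where "Ha = {1, 4, 6, 8, 9}"
definition Hb :: "nat set" where "Hb = {9, 1, 2, 3, 4}"
definition He :: "nat \<Rightarrow> nat set" where "He i = {i, i+1, i+2, i+3, i+4}"

definition H_edges :: "nat set set" where
  "H_edges = {Hr, Hg, Ha, Hb} \<union> He ` {1..5}"

definition H_verts :: "nat set" where "H_verts = \<Union> H_edges"

definition H_del_edges :: "nat set \<Rightarrow> nat set \<Rightarrow> nat set set" where
  "H_del_edges e f = H_edges - {e, f}"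

definition H_del_verts :: "nat set \<Rightarrow> nat set \<Rightarrow> nat set" where
  "H_del_verts e f = \<Union> (H_del_edges e f)"

definition monomorphism_into_H :: "nat set \<Rightarrow> nat set set \<Rightarrow> (nat \<Rightarrow> nat) \<Rightarrow> bool" where
  "monomorphism_into_H V E \<phi> \<longleftrightarrow>
     inj_on \<phi> V \<and> \<phi> ` V \<subseteq> H_verts \<and> (\<forall>x\<in>E. \<phi> ` x \<in> H_edges)"

end

(*
  Since phi is injective on vertices, it maps each of the seven remaining edges onto an edge of H,
  injectively, and preserves the sizes of pairwise intersections; moreover a vertex v can only go
  to a vertex lying in exactly those image edges that come from edges through v. As b and e_5
  survive, {e, f} is one of 21 pairs of edges, and for each of them an exhaustive search over the
  intersection-preserving edge maps shows that these incidence constraints either leave some vertex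
  without an admissible image or allow each vertex only itself.
*)

theory Submission
  imports Defs
begin

text \<open>Edge k is the k-th of r, g, a, b, e_1, ..., e_5; so b is edge 3 and e_5 is edge 8.\<close>

definition edge_list :: "nat list list" where
  "edge_list = [[0,1,3,5,8], [0,2,4,7,9], [1,4,6,8,9], [9,1,2,3,4],
    [1,2,3,4,5], [2,3,4,5,6], [3,4,5,6,7], [4,5,6,7,8], [5,6,7,8,9]]"

definition edge :: "nat \<Rightarrow> nat set" where "edge k = set (edge_list ! k)"

lemma H_edges_eq: "H_edges = edge ` {..<9}"
  unfolding H_edges_def Hr_def Hg_def Ha_def Hb_def He_def vz_def edge_def edge_list_def
  by (simp add: lessThan_Suc atLeastAtMostSuc_conv insert_commute eval_nat_numeral)

lemma Hb_eq: "Hb = edge 3" and He5_eq: "He 5 = edge 8"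
  by (auto simp: Hb_def He_def edge_def edge_list_def)

lemma H_verts_eq: "H_verts = {..<10}"
  unfolding H_verts_def H_edges_eq edge_def edge_list_def
  by (simp add: lessThan_Suc eval_nat_numeral insert_commute)

lemma inj_on_edge: "inj_on edge {..<9}"
proof -
  have "distinct (map edge [0..<9])"
    by code_simp
  then show ?thesis
    by (simp add: distinct_map atLeast0LessThan)
qed

lemma edge_subset_H_verts: "k < 9 \<Longrightarrow> edge k \<subseteq> H_verts"
  unfolding H_verts_def H_edges_eq by blast

definition meet :: "nat \<Rightarrow> nat \<Rightarrow> nat" where
  "meet k l = card (edge k \<inter> edge l)"

text \<open>Table lookup instead of computing the cardinality makes the search by code_simp much faster.\<close>

definition meet_table :: "nat list list" where
  "meet_table = map (\<lambda>k. map (meet k) [0..<9]) [0..<9]"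

lemma meet_table_eq [code]:
  "meet_table = [[5,1,2,2,3,2,2,2,2], [1,5,2,3,2,2,2,2,2], [2,2,5,3,2,2,2,3,3],
    [2,3,3,5,4,3,2,1,1], [3,2,2,4,5,4,3,2,1], [2,2,2,3,4,5,4,3,2],
    [2,2,2,2,3,4,5,4,3], [2,2,3,1,2,3,4,5,4], [2,2,3,1,1,2,3,4,5]]"
  by code_simp

lemma meet_code [code]:
  "meet k l = (if k < 9 \<and> l < 9 then meet_table ! k ! l else card (edge k \<inter> edge l))"
  by (simp add: meet_table_def meet_def)

text \<open>A matching for the edge list ks is the graph, listed along ks, of an injective map on edge
  indices preserving meet; candidates m v are the vertices lying in exactly the images under m of
  the edges through v.\<close>

definition extend_matchings :: "(nat \<times> nat) list list \<Rightarrow> nat \<Rightarrow> (nat \<times> nat) list list" where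
  "extend_matchings ms k =
     concat (map (\<lambda>m. map (\<lambda>t. m @ [(k, t)])
       (filter (\<lambda>t. t \<notin> snd ` set m \<and> (\<forall>(k', t') \<in> set m. meet t t' = meet k k')) [0..<9])) ms)"

definition matchings :: "nat list \<Rightarrow> (nat \<times> nat) list list" where
  "matchings ks = foldl extend_matchings [[]] ks"

definition candidates :: "(nat \<times> nat) list \<Rightarrow> nat \<Rightarrow> nat list" where
  "candidates m v = filter (\<lambda>t. \<forall>(k, t') \<in> set m. (v \<in> edge k) = (t \<in> edge t')) [0..<10]"

definition forces_identity :: "nat list \<Rightarrow> bool" where
  "forces_identity ks \<longleftrightarrow>
     (\<forall>m \<in> set (matchings ks).
        let vs = filter (\<lambda>v. \<exists>k \<in> set ks. v \<in> edge k) [0..<10] in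
        (\<exists>v \<in> set vs. candidates m v = []) \<or> (\<forall>v \<in> set vs. set (candidates m v) \<subseteq> {v}))"

lemma snoc_mem_extend_matchings:
  assumes "m \<in> set ms" "t < 9" "t \<notin> snd ` set m" "\<forall>(k', t') \<in> set m. meet t t' = meet k k'"
  shows "m @ [(k, t)] \<in> set (extend_matchings ms k)"
  using assms unfolding extend_matchings_def by (simp add: image_iff)

lemma graph_mem_matchings:
  assumes "distinct ks" "\<psi> ` set ks \<subseteq> {..<9}" "inj_on \<psi> (set ks)"
    and "\<forall>k \<in> set ks. \<forall>l \<in> set ks. meet (\<psi> k) (\<psi> l) = meet k l"
  shows "map (\<lambda>k. (k, \<psi> k)) ks \<in> set (matchings ks)"
  using assms
proof (induction ks rule: rev_induct)
  case Nil
  then show ?case by (simp add: matchings_def)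
next
  case (snoc k ks)
  have "map (\<lambda>k. (k, \<psi> k)) ks \<in> set (matchings ks)"
    using snoc.prems by (intro snoc.IH) (auto intro: inj_on_subset)
  moreover have "\<psi> k \<notin> \<psi> ` set ks"
    using snoc.prems(1,3) by (auto simp: inj_on_def)
  ultimately have "map (\<lambda>k. (k, \<psi> k)) ks @ [(k, \<psi> k)] \<in> set (extend_matchings (matchings ks) k)"
    using snoc.prems(2,4) by (intro snoc_mem_extend_matchings) (auto simp: image_image)
  then show ?case by (simp add: matchings_def)
qed

locale induced_edge_map =
  fixes \<phi> :: "nat \<Rightarrow> nat" and \<psi> :: "nat \<Rightarrow> nat" and K :: "nat set"
  assumes K_subset: "K \<subseteq> {..<9}"
    and inj_\<phi>: "inj_on \<phi> (\<Union> (edge ` K))"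
    and image_edge: "\<And>k. k \<in> K \<Longrightarrow> \<phi> ` edge k = edge (\<psi> k)"
begin

lemma edge_subset: "k \<in> K \<Longrightarrow> edge k \<subseteq> \<Union> (edge ` K)"
  by blast

lemma inj_\<psi>: "inj_on \<psi> K"
proof (rule inj_onI)
  fix k l assume kl: "k \<in> K" "l \<in> K" "\<psi> k = \<psi> l"
  then have "\<phi> ` edge k = \<phi> ` edge l"
    by (simp add: image_edge)
  then have "edge k = edge l"
    using kl(1,2) by (simp add: inj_on_image_eq_iff[OF inj_\<phi>] edge_subset)
  then show "k = l"
    using inj_on_edge K_subset kl(1,2) by (auto dest: inj_onD)
qed

lemma meet_\<psi>:
  assumes "k \<in> K" "l \<in> K"
  shows "meet (\<psi> k) (\<psi> l) = meet k l"
proof -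
  have "edge (\<psi> k) \<inter> edge (\<psi> l) = \<phi> ` (edge k \<inter> edge l)"
    using assms by (simp add: image_edge[symmetric] inj_on_image_Int[OF inj_\<phi>] edge_subset)
  moreover have "inj_on \<phi> (edge k \<inter> edge l)"
    using assms edge_subset by (blast intro: inj_on_subset[OF inj_\<phi>])
  ultimately show ?thesis
    by (simp add: meet_def card_image)
qed

lemma image_mem_candidates:
  assumes "set ks = K" "v \<in> \<Union> (edge ` K)" "\<phi> v < 10"
  shows "\<phi> v \<in> set (candidates (map (\<lambda>k. (k, \<psi> k)) ks) v)"
proof -
  have "(v \<in> edge k) = (\<phi> v \<in> edge (\<psi> k))" if "k \<in> K" for k
    using that assms(2) by (simp add: image_edge[symmetric] inj_on_image_mem_iff[OF inj_\<phi>] edge_subset)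
  then show ?thesis
    using assms(1,3) by (auto simp: candidates_def)
qed

end

lemma forces_identity_fixes:
  assumes "forces_identity ks" "distinct ks" "set ks \<subseteq> {..<9}"
    and "inj_on \<phi> (\<Union> (edge ` set ks))" "\<phi> ` \<Union> (edge ` set ks) \<subseteq> H_verts"
    and "\<forall>k \<in> set ks. \<phi> ` edge k \<in> H_edges"
  shows "\<forall>v \<in> \<Union> (edge ` set ks). \<phi> v = v"
proof -
  have "\<forall>k \<in> set ks. \<exists>t. t < 9 \<and> \<phi> ` edge k = edge t"
    using assms(6) unfolding H_edges_eq by blast
  then obtain \<psi> where \<psi>: "\<forall>k \<in> set ks. \<psi> k < 9 \<and> \<phi> ` edge k = edge (\<psi> k)"
    by metis
  interpret induced_edge_map \<phi> \<psi> "set ks"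
    using assms(3,4) \<psi> by unfold_locales auto
  define V where "V = \<Union> (edge ` set ks)"
  define m where "m = map (\<lambda>k. (k, \<psi> k)) ks"
  have "V \<subseteq> {..<10}"
    using assms(3) edge_subset_H_verts unfolding V_def H_verts_eq by blast
  then have vertices: "set (filter (\<lambda>v. \<exists>k \<in> set ks. v \<in> edge k) [0..<10]) = V"
    unfolding set_filter set_upt atLeast0LessThan V_def by blast
  have "\<forall>m \<in> set (matchings ks).
      (\<exists>v \<in> V. candidates m v = []) \<or> (\<forall>v \<in> V. set (candidates m v) \<subseteq> {v})"
    using assms(1) unfolding forces_identity_def Let_def vertices .
  moreover have "m \<in> set (matchings ks)"
    unfolding m_def using assms(2) \<psi> inj_\<psi> meet_\<psi> by (intro graph_mem_matchings) auto
  ultimately have "(\<exists>v \<in> V. candidates m v = []) \<or> (\<forall>v \<in> V. set (candidates m v) \<subseteq> {v})"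
    by (rule bspec)
  moreover have "\<phi> v \<in> set (candidates m v)" if "v \<in> V" for v
    using that assms(5) unfolding m_def V_def by (intro image_mem_candidates) (auto simp: H_verts_eq)
  ultimately show ?thesis
    unfolding V_def[symmetric] by fastforce
qed

text \<open>Listing the edges in decreasing order lets the search prune earlier.\<close>

definition remaining :: "nat \<Rightarrow> nat \<Rightarrow> nat list" where
  "remaining i j = filter (\<lambda>k. k \<noteq> i \<and> k \<noteq> j) (rev [0..<9])"

lemma set_remaining: "set (remaining i j) = {..<9} - {i, j}"
  by (auto simp: remaining_def)

lemma H_del_edges_edge:
  assumes "i < 9" "j < 9"
  shows "H_del_edges (edge i) (edge j) = edge ` set (remaining i j)"
  using assms by (simp add: H_del_edges_def H_edges_eq set_remaining inj_on_image_set_diff[OF inj_on_edge])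

lemma forces_identity_remaining:
  assumes "i < 9" "j < 9" "i \<noteq> j" "i \<notin> {3, 8}" "j \<notin> {3, 8}"
  shows "forces_identity (remaining i j)"
proof -
  let ?free = "[0, 1, 2, 4, 5, 6, 7] :: nat list"
  let ?pairs = "filter (\<lambda>(a, b). a < b) (List.product ?free ?free)"
  have "list_all (\<lambda>(a, b). forces_identity (remaining a b)) ?pairs"
    by code_simp
  then have ordered: "forces_identity (remaining a b)"
    if "a \<in> set ?free" "b \<in> set ?free" "a < b" for a b
  proof -
    have "(a, b) \<in> set ?pairs"
      using that by (simp only: set_filter set_product mem_Collect_eq mem_Times_iff
          fst_conv snd_conv prod.case simp_thms)
    with \<open>list_all _ ?pairs\<close> have "case (a, b) of (a, b) \<Rightarrow> forces_identity (remaining a b)"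
      unfolding list_all_iff by (rule bspec)
    then show ?thesis
      by (simp only: prod.case)
  qed
  have "i \<in> set ?free" "j \<in> set ?free"
    using assms by (auto simp: eval_nat_numeral less_Suc_eq)
  moreover have "remaining i j = remaining j i"
    by (simp add: remaining_def conj_commute)
  ultimately show ?thesis
    using assms(3) ordered by (metis linorder_neqE_nat)
qed

theorem lemma4p10:
  fixes e f :: "nat set" and \<phi> :: "nat \<Rightarrow> nat"
  assumes "e \<in> H_edges" and "f \<in> H_edges" and "e \<noteq> f"
    and "monomorphism_into_H (H_del_verts e f) (H_del_edges e f) \<phi>"
    and "Hb \<in> H_del_edges e f" and "He 5 \<in> H_del_edges e f"
  shows "\<forall>y\<in>H_del_verts e f. \<phi> y = y"
proof -
  obtain i j where ij: "i < 9" "j < 9" "e = edge i" "f = edge j"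
    using assms(1,2) by (auto simp: H_edges_eq)
  have "i \<noteq> j"
    using assms(3) ij by blast
  have del_edges: "H_del_edges e f = edge ` set (remaining i j)"
    using ij by (simp add: H_del_edges_edge)
  have "{3, 8} \<subseteq> set (remaining i j)"
    using assms(5,6) unfolding del_edges Hb_eq He5_eq set_remaining
    by (auto simp: inj_on_image_mem_iff[OF inj_on_edge])
  then have "forces_identity (remaining i j)"
    using ij(1,2) \<open>i \<noteq> j\<close> by (intro forces_identity_remaining) (auto simp: set_remaining)
  moreover have "distinct (remaining i j)" "set (remaining i j) \<subseteq> {..<9}"
    by (auto simp: remaining_def)
  ultimately show ?thesis
    using assms(4) unfolding monomorphism_into_H_def H_del_verts_def del_edges
    by (intro forces_identity_fixes) auto
qed

end
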